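(* Let $N\ge1$. The set $\mathfrak{T}_N:=\{T_\Lambda:\Lambda\subseteq P_N\}$ is a subgroup of $\mathrm{Aut}(\mathbb{D}_N)_\pi\cap\mathrm{C}(\mathfrak{M}_N)$ isomorphic to $\{\pm1\}^N$, and $T_{\Lambda_1}T_{\Lambda_2}=T_{\Lambda_1\oplus\Lambda_2}$ for all $\Lambda_1,\Lambda_2\subseteq P_N$. Furthermore, $\mathfrak{T}_N$ acts on $\mathcal{E}$ by composition on the right ($\epsilon\mapsto\epsilon\circ T_\Lambda\in\mathcal{E}$), and $$F_N\big(u,T_\Lambda(w,a,\theta)\big)=(-1)^{|\Lambda|}\mathrm{e}\big(\mathrm{Tr}(\theta,\Lambda)\big)F_N(u,w,a,\theta)$$ for all $(w,a,\theta)\in\mathbb{D}_N$ and all $u\in\mathbb{C}$ away from singularities.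
   Context: $\mathrm{e}(z):=\mathrm{e}^{2\pi iz}$, $P_N=\{1,\dots,N\}$; vectors are functions on $P_N$, $v^{-1}[S]=\{\ell:v_\ell\in S\}$, $\mathrm{Tr}(v,\Lambda):=\sum_{\ell\in\Lambda}v_\ell$; $\oplus$ is symmetric difference. $\mathcal{C}:=\{z:\mathrm{Re}(z)>0\text{ or }z\in i\mathbb{R}_{>0}\}$. $\mathbb{D}_N:=\{(w,a,\theta)\in\mathbb{C}\times\mathbb{C}^N\times\mathbb{R}^N:a^{-1}[0]\subseteq\theta^{-1}[\mathbb{R}\smallsetminus\mathbb{Z}]\}$; $\pi(w,a,\theta):=w-\mathrm{Tr}(a,a^{-1}[-\mathcal{C}])$. $\mathrm{Aut}(\mathbb{D}_N)$: homeomorphisms of $\mathbb{D}_N$; $\mathrm{Aut}(\mathbb{D}_N)_\pi:=\{g:\pi\circ g=\pi\}$. $M_\alpha(w,a,\theta):=(\alpha w,\alpha a,\theta)$, $\mathfrak{M}_N=\{M_\alpha:\alpha\in\mathbb{C}^*\}$, $\mathrm{C}(\mathfrak{M}_N)$ its centralizer in $\mathrm{Aut}(\mathbb{D}_N)$. $T_\Lambda(w,a,\theta):=(w-\mathrm{Tr}(a,\Lambda),a\,d(\Lambda),\theta\,d(\Lambda))$ with $d(\Lambda)$ the diagonal matrix with entry $-1$ at $\ell\in\Lambda$ and $1$ otherwise. $F_N(u,w,a,\theta):=\mathrm{e}^{-uw}\prod_\ell(1-\mathrm{e}(\theta_\ell)\mathrm{e}^{-ua_\ell})^{-1}$. $\mathcal{E}$: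 the set of $\epsilon:\mathbb{D}_N\to\mathbb{R}_{>0}$ such that for all $(w,a,\theta)$ and $\ell$, $\mathrm{e}(\theta_\ell)=\mathrm{e}^{ua_\ell}$ has no solution with $0<|u|\le\epsilon(w,a,\theta)$. *)

theory Defs
  imports "HOL-Analysis.Analysis" "HOL-Algebra.Group"
begin

text \<open>Index set P_N is the finite type 'n (N = CARD('n) >= 1).
  Points of the ambient space: (w, a, theta).\<close>

type_synonym 'n pt = "complex \<times> ('n \<Rightarrow> complex) \<times> ('n \<Rightarrow> real)"

definition ee :: "complex \<Rightarrow> complex" where
  "ee z = exp (2 * of_real pi * \<i> * z)"

definition symdiff :: "'a set \<Rightarrow> 'a set \<Rightarrow> 'a set" where
  "symdiff A B = (A - B) \<union> (B - A)"

definition Cset :: "complex set" where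
  "Cset = {z. Re z > 0 \<or> (Re z = 0 \<and> Im z > 0)}"

definition DD :: "('n::finite) pt set" where
  "DD = {(w, a, \<theta>). \<forall>l. a l = 0 \<longrightarrow> \<theta> l \<notin> \<int>}"

definition piD :: "('n::finite) pt \<Rightarrow> complex" where
  "piD p = (case p of (w, a, \<theta>) \<Rightarrow> w - (\<Sum>l\<in>{l. a l \<in> uminus ` Cset}. a l))"

definition Aut :: "(('n::finite) pt \<Rightarrow> 'n pt) monoid" where
  "Aut = \<lparr>carrier = {g. g \<in> extensional DD \<and> (\<exists>g'. homeomorphism DD DD g g')},
          mult = (\<lambda>f g. restrict (f \<circ> g) DD),
          one = restrict id DD\<rparr>"

definition Aut_pi :: "(('n::finite) pt \<Rightarrow> 'n pt) set" where
  "Aut_pi = {g \<in> carrier Aut. \<forall>x\<in>DD. piD (g x) = piD x}"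

definition MM :: "complex \<Rightarrow> ('n::finite) pt \<Rightarrow> 'n pt" where
  "MM \<alpha> p = (case p of (w, a, \<theta>) \<Rightarrow> (\<alpha> * w, \<lambda>l. \<alpha> * a l, \<theta>))"

definition CM :: "(('n::finite) pt \<Rightarrow> 'n pt) set" where
  "CM = {g \<in> carrier Aut. \<forall>\<alpha>. \<alpha> \<noteq> 0 \<longrightarrow> (\<forall>x\<in>DD. g (MM \<alpha> x) = MM \<alpha> (g x))}"

definition TT :: "('n::finite) set \<Rightarrow> 'n pt \<Rightarrow> 'n pt" where
  "TT \<Lambda> p = (case p of (w, a, \<theta>) \<Rightarrow>
     (w - (\<Sum>l\<in>\<Lambda>. a l),
      \<lambda>l. if l \<in> \<Lambda> then - a l else a l,
      \<lambda>l. if l \<in> \<Lambda> then - \<theta> l else \<theta> l))"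

definition TTgroup :: "(('n::finite) pt \<Rightarrow> 'n pt) set" where
  "TTgroup = {restrict (TT \<Lambda>) DD | \<Lambda>. True}"

definition PM :: "(('n::finite) \<Rightarrow> int) monoid" where
  "PM = \<lparr>carrier = {\<sigma>. \<forall>l. \<sigma> l \<in> {-1, 1}},
         mult = (\<lambda>\<sigma> \<tau> l. \<sigma> l * \<tau> l),
         one = (\<lambda>_. 1)\<rparr>"

definition FF :: "complex \<Rightarrow> ('n::finite) pt \<Rightarrow> complex" where
  "FF u p = (case p of (w, a, \<theta>) \<Rightarrow>
     exp (- u * w) * (\<Prod>l\<in>UNIV. 1 / (1 - ee (of_real (\<theta> l)) * exp (- u * a l))))"

definition EE :: "(('n::finite) pt \<Rightarrow> real) set" where
  "EE = {\<epsilon>. \<forall>p\<in>DD. \<epsilon> p > 0 \<and>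
          (case p of (w, a, \<theta>) \<Rightarrow> \<forall>l u. 0 < cmod u \<and> cmod u \<le> \<epsilon> p \<longrightarrow>
              ee (of_real (\<theta> l)) \<noteq> exp (u * a l))}"

end

theory Submission
  imports Defs
begin

text \<open>Each \<open>T\<^sub>\<Lambda>\<close> is a continuous involution of \<open>\<bbbD>\<^sub>N\<close>, and composing two of them
  negates exactly the coordinates in \<open>\<Lambda>\<^sub>1 \<oplus> \<Lambda>\<^sub>2\<close>, so \<open>T\<^sub>\<Lambda>\<^sub>1 T\<^sub>\<Lambda>\<^sub>2 = T\<^bsub>\<Lambda>\<^sub>1 \<oplus> \<Lambda>\<^sub>2\<^esub>\<close> and
  \<open>\<Lambda> \<mapsto> T\<^sub>\<Lambda>\<close> is an injective homomorphism from \<open>(2\<^bsup>P\<^sub>N\<^esup>, \<oplus>) \<cong> {\<plusminus>1}\<^sup>N\<close> into the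
  homeomorphism group. \<open>T\<^sub>\<Lambda>\<close> is linear, hence commutes with the scalings \<open>M\<^sub>\<alpha>\<close>, and it
  preserves \<open>\<pi>\<close> because for every \<open>z\<close> exactly one of \<open>z\<close>, \<open>-z\<close> lies in \<open>-\<C>\<close> unless \<open>z = 0\<close>,
  so the parts of \<open>z\<close> and \<open>-z\<close> in \<open>-\<C>\<close> differ by \<open>z\<close>. Finally, flipping \<open>(a\<^sub>l, \<theta>\<^sub>l)\<close>
  inverts \<open>x\<^sub>l = e(\<theta>\<^sub>l) e\<^bsup>-u a\<^sub>l\<^esup>\<close>; the resonance condition defining \<open>\<E>\<close> is invariant under
  this, and \<open>1 / (1 - x\<^sup>-\<^sup>1) = -x / (1 - x)\<close> produces the factor
  \<open>(-1)\<^bsup>|\<Lambda>|\<^esup> e(Tr(\<theta>, \<Lambda>))\<close> in \<open>F\<^sub>N\<close>, the \<open>e\<^bsup>-u a\<^sub>l\<^esup>\<close> cancelling against the shift of \<open>w\<close>.\<close>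

definition homeomorphism_group :: "'a::topological_space set \<Rightarrow> ('a \<Rightarrow> 'a) monoid" where
  "homeomorphism_group S =
     \<lparr>carrier = {g. g \<in> extensional S \<and> (\<exists>g'. homeomorphism S S g g')},
      mult = (\<lambda>f g. restrict (f \<circ> g) S),
      one = restrict id S\<rparr>"

lemma homeomorphism_restrict:
  "homeomorphism S T f g \<Longrightarrow> homeomorphism S T (restrict f S) (restrict g T)"
  by (erule homeomorphism_cong) auto

lemma mem_homeomorphism_group:
  "f \<in> carrier (homeomorphism_group S) \<longleftrightarrow> f \<in> extensional S \<and> (\<exists>g. homeomorphism S S f g)"
  by (simp add: homeomorphism_group_def)

lemma homeomorphism_group_maps_to:
  "f \<in> carrier (homeomorphism_group S) \<Longrightarrow> x \<in> S \<Longrightarrow> f x \<in> S"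
  unfolding mem_homeomorphism_group using homeomorphism_image1 by blast

lemma monoid_homeomorphism_group: "monoid (homeomorphism_group S)"
proof (rule monoidI)
  let ?G = "homeomorphism_group S"
  fix f g assume "f \<in> carrier ?G" "g \<in> carrier ?G"
  then obtain f' g' where "homeomorphism S S f f'" "homeomorphism S S g g'"
    unfolding mem_homeomorphism_group by blast
  then have "homeomorphism S S (f \<circ> g) (g' \<circ> f')"
    by (intro homeomorphism_compose)
  then show "f \<otimes>\<^bsub>?G\<^esub> g \<in> carrier ?G"
    unfolding mem_homeomorphism_group
    by (auto simp: homeomorphism_group_def dest: homeomorphism_restrict)
next
  let ?G = "homeomorphism_group S"
  show "\<one>\<^bsub>?G\<^esub> \<in> carrier ?G"
    using homeomorphism_restrict[OF homeomorphism_ident]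
    unfolding mem_homeomorphism_group by (auto simp: homeomorphism_group_def id_def)
next
  let ?G = "homeomorphism_group S"
  fix f g h assume "h \<in> carrier ?G"
  then have "\<And>x. x \<in> S \<Longrightarrow> h x \<in> S" by (rule homeomorphism_group_maps_to)
  then show "f \<otimes>\<^bsub>?G\<^esub> g \<otimes>\<^bsub>?G\<^esub> h = f \<otimes>\<^bsub>?G\<^esub> (g \<otimes>\<^bsub>?G\<^esub> h)"
    by (simp add: homeomorphism_group_def fun_eq_iff)
next
  let ?G = "homeomorphism_group S"
  fix f assume f: "f \<in> carrier ?G"
  have "restrict (restrict id S \<circ> f) S = restrict f S" "restrict (f \<circ> restrict id S) S = restrict f S"
    using homeomorphism_group_maps_to[OF f] by (auto intro: restrict_ext)
  moreover have "restrict f S = f"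
    using f by (simp add: mem_homeomorphism_group extensional_restrict)
  ultimately show "\<one>\<^bsub>?G\<^esub> \<otimes>\<^bsub>?G\<^esub> f = f" "f \<otimes>\<^bsub>?G\<^esub> \<one>\<^bsub>?G\<^esub> = f"
    by (simp_all add: homeomorphism_group_def)
qed

lemma group_homeomorphism_group: "group (homeomorphism_group S)"
  using monoid_homeomorphism_group
proof (rule monoid.group_l_invI)
  let ?G = "homeomorphism_group S"
  fix f assume "f \<in> carrier ?G"
  then obtain g where g: "homeomorphism S S f g"
    unfolding mem_homeomorphism_group by blast
  then have "restrict g S \<in> carrier ?G"
    unfolding mem_homeomorphism_group by (auto dest: homeomorphism_restrict homeomorphism_symD)
  moreover have "restrict g S \<otimes>\<^bsub>?G\<^esub> f = \<one>\<^bsub>?G\<^esub>"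
    using g homeomorphism_image1[OF g]
    by (auto simp: homeomorphism_group_def homeomorphism_apply1 intro!: restrict_ext)
  ultimately show "\<exists>g\<in>carrier ?G. g \<otimes>\<^bsub>?G\<^esub> f = \<one>\<^bsub>?G\<^esub>" by blast
qed

lemma Aut_eq_homeomorphism_group: "Aut = homeomorphism_group DD"
  by (simp add: Aut_def homeomorphism_group_def)

lemma group_Aut: "group Aut"
  unfolding Aut_eq_homeomorphism_group by (rule group_homeomorphism_group)

lemma TT_in_DD: "p \<in> DD \<Longrightarrow> TT \<Lambda> p \<in> DD"
  unfolding DD_def TT_def by (cases p) (auto simp: minus_in_Ints_iff)

lemma TT_empty [simp]: "TT {} p = p"
  unfolding TT_def by (cases p) simp

lemma symdiff_self [simp]: "symdiff A A = {}"
  unfolding symdiff_def by blast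

lemma sum_eq_sum_UNIV_if:
  "(\<Sum>l\<in>A. f l) = (\<Sum>l\<in>(UNIV :: 'a::finite set). if l \<in> A then f l else 0)"
  by (simp add: sum.If_cases)

lemma negate_twice_symdiff:
  "(\<lambda>l. if l \<in> \<Lambda>1 then - (if l \<in> \<Lambda>2 then - x l else x l) else if l \<in> \<Lambda>2 then - x l else x l)
    = (\<lambda>l. if l \<in> symdiff \<Lambda>1 \<Lambda>2 then - x l else (x l :: 'a::group_add))"
  by (auto simp: symdiff_def fun_eq_iff)

lemma TT_TT: "TT \<Lambda>1 (TT \<Lambda>2 p) = TT (symdiff \<Lambda>1 \<Lambda>2) (p :: ('n::finite) pt)"
proof -
  obtain w a \<theta> where p: "p = (w, a, \<theta>)" by (cases p)
  have "(\<Sum>l\<in>\<Lambda>2. a l) + (\<Sum>l\<in>\<Lambda>1. if l \<in> \<Lambda>2 then - a l else a l)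
      = (\<Sum>l\<in>UNIV. (if l \<in> \<Lambda>2 then a l else 0) + (if l \<in> \<Lambda>1 then if l \<in> \<Lambda>2 then - a l else a l else 0))"
    by (simp only: sum_eq_sum_UNIV_if[where A=\<Lambda>1] sum_eq_sum_UNIV_if[where A=\<Lambda>2] sum.distrib)
  also have "\<dots> = (\<Sum>l\<in>UNIV. if l \<in> symdiff \<Lambda>1 \<Lambda>2 then a l else 0)"
    by (rule sum.cong) (auto simp: symdiff_def)
  finally have sum_eq: "(\<Sum>l\<in>\<Lambda>2. a l) + (\<Sum>l\<in>\<Lambda>1. if l \<in> \<Lambda>2 then - a l else a l) = (\<Sum>l\<in>symdiff \<Lambda>1 \<Lambda>2. a l)"
    by (simp only: sum_eq_sum_UNIV_if[where A="symdiff \<Lambda>1 \<Lambda>2"])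
  then show ?thesis
    unfolding p TT_def by (simp only: prod.case negate_twice_symdiff diff_diff_eq sum_eq)
qed

lemma TT_TT_self [simp]: "TT \<Lambda> (TT \<Lambda> p) = p"
  by (simp add: TT_TT)

lemma continuous_on_TT: "continuous_on S (TT \<Lambda> :: ('n::finite) pt \<Rightarrow> 'n pt)"
proof -
  define s :: "'n \<Rightarrow> real" where "s l = (if l \<in> \<Lambda> then -1 else 1)" for l
  have a: "continuous_on S (\<lambda>p::'n pt. fst (snd p) l)" and \<theta>: "continuous_on S (\<lambda>p::'n pt. snd (snd p) l)" for l
    by (rule continuous_on_product_then_coordinatewise, intro continuous_intros)+
  have "TT \<Lambda> = (\<lambda>p. (fst p - (\<Sum>l\<in>\<Lambda>. fst (snd p) l),
      \<lambda>l. of_real (s l) * fst (snd p) l, \<lambda>l. s l * snd (snd p) l))"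
    unfolding TT_def s_def by (auto simp: fun_eq_iff split: prod.splits)
  then show ?thesis
    by (auto intro!: continuous_intros a \<theta>)
qed

lemma uminus_Cset_part_diff:
  "(if z \<in> uminus ` Cset then z else 0) - (if - z \<in> uminus ` Cset then - z else 0) = z"
proof -
  have "z \<in> uminus ` Cset \<longleftrightarrow> Re z < 0 \<or> Re z = 0 \<and> Im z < 0" for z
    by (auto simp: Cset_def image_iff intro: exI[of _ "- z"])
  then show ?thesis by (auto simp: complex_eq_iff)
qed

lemma piD_TT: "piD (TT \<Lambda> p) = piD (p :: ('n::finite) pt)"
proof -
  obtain w a \<theta> where p: "p = (w, a, \<theta>)" by (cases p)
  define neg_part where "neg_part z = (if z \<in> uminus ` Cset then z else 0)" for z
  have piD_eq: "piD (w', a', \<theta>') = w' - (\<Sum>l\<in>UNIV. neg_part (a' l))" for w' and a' :: "'n \<Rightarrow> complex" and \<theta>'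
    unfolding piD_def neg_part_def by (simp add: sum.If_cases Int_def)
  have "(\<Sum>l\<in>UNIV. neg_part (a l)) - (\<Sum>l\<in>UNIV. neg_part (if l \<in> \<Lambda> then - a l else a l))
      = (\<Sum>l\<in>UNIV. if l \<in> \<Lambda> then a l else 0)"
    unfolding sum_subtractf[symmetric]
    by (rule sum.cong) (simp_all add: uminus_Cset_part_diff[folded neg_part_def])
  then show ?thesis
    unfolding p TT_def by (simp add: piD_eq sum_eq_sum_UNIV_if[where A=\<Lambda>] algebra_simps)
qed

lemma TT_MM: "TT \<Lambda> (MM \<alpha> p) = MM \<alpha> (TT \<Lambda> p)"
  unfolding TT_def MM_def by (cases p) (auto simp: sum_distrib_left algebra_simps fun_eq_iff)

lemma MM_in_DD: "\<alpha> \<noteq> 0 \<Longrightarrow> p \<in> DD \<Longrightarrow> MM \<alpha> p \<in> DD"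
  unfolding MM_def DD_def by (cases p) auto

abbreviation TTD :: "('n::finite) set \<Rightarrow> 'n pt \<Rightarrow> 'n pt" where
  "TTD \<Lambda> \<equiv> restrict (TT \<Lambda>) DD"

lemma TTD_in_Aut: "TTD \<Lambda> \<in> carrier Aut"
proof -
  have "homeomorphism DD DD (TT \<Lambda>) (TT \<Lambda>)"
    by (rule homeomorphismI) (auto simp: continuous_on_TT TT_in_DD)
  then show ?thesis
    by (auto simp: Aut_def dest: homeomorphism_restrict)
qed

lemma TTD_mult: "TTD \<Lambda>1 \<otimes>\<^bsub>Aut\<^esub> TTD \<Lambda>2 = TTD (symdiff \<Lambda>1 \<Lambda>2)"
  by (auto simp: Aut_def TT_in_DD TT_TT intro!: restrict_ext)

lemma one_Aut: "\<one>\<^bsub>Aut\<^esub> = TTD {}"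
  by (auto simp: Aut_def intro!: restrict_ext)

lemma inv_TTD: "inv\<^bsub>Aut\<^esub> (TTD \<Lambda>) = TTD \<Lambda>"
  by (rule group.inv_equality[OF group_Aut]) (simp_all add: TTD_mult one_Aut TTD_in_Aut)

lemma inj_TTD: "inj (TTD :: ('n::finite) set \<Rightarrow> 'n pt \<Rightarrow> 'n pt)"
proof (rule inj_on_inverseI)
  let ?p = "(0, \<lambda>_. 1, \<lambda>_. 0) :: 'n pt"
  have "?p \<in> DD" by (simp add: DD_def)
  then show "{l. fst (snd (TTD \<Lambda> ?p)) l = -1} = \<Lambda>" for \<Lambda> :: "'n set"
    unfolding TT_def by auto
qed

lemma TTgroup_eq_range: "TTgroup = range TTD"
  unfolding TTgroup_def by blast

lemma subgroup_TTgroup: "subgroup TTgroup Aut"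
proof (rule group.subgroupI[OF group_Aut])
  show "TTgroup \<subseteq> carrier Aut" "TTgroup \<noteq> {}"
    by (auto simp: TTgroup_eq_range TTD_in_Aut)
  show "inv\<^bsub>Aut\<^esub> g \<in> TTgroup" if "g \<in> TTgroup" for g
    using that by (auto simp: TTgroup_eq_range inv_TTD)
  show "g \<otimes>\<^bsub>Aut\<^esub> h \<in> TTgroup" if "g \<in> TTgroup" "h \<in> TTgroup" for g h
    using that by (auto simp: TTgroup_eq_range TTD_mult)
qed

lemma TTgroup_subset_Aut_pi: "TTgroup \<subseteq> Aut_pi"
  by (auto simp: Aut_pi_def TTgroup_eq_range TTD_in_Aut TT_in_DD piD_TT)

lemma TTgroup_subset_CM: "TTgroup \<subseteq> CM"
  by (auto simp: CM_def TTgroup_eq_range TTD_in_Aut TT_MM MM_in_DD)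

lemma PM_mult_minus_one_set:
  assumes "\<sigma> \<in> carrier PM" "\<tau> \<in> carrier PM"
  shows "{l. (\<sigma> \<otimes>\<^bsub>PM\<^esub> \<tau>) l = -1} = symdiff {l. \<sigma> l = -1} {l. \<tau> l = -1}"
  using assms unfolding PM_def symdiff_def by force

lemma bij_betw_PM_minus_one_set: "bij_betw (\<lambda>\<sigma>. {l. \<sigma> l = -1}) (carrier PM) UNIV"
  by (rule bij_betw_byWitness[where f' = "\<lambda>\<Lambda> l. if l \<in> \<Lambda> then -1 else 1"])
    (auto simp: PM_def fun_eq_iff split: if_splits)

lemma iso_PM_TTgroup: "(\<lambda>\<sigma>. TTD {l. \<sigma> l = -1}) \<in> iso PM (Aut\<lparr>carrier := TTgroup\<rparr>)"
proof (rule isoI)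
  show "(\<lambda>\<sigma>. TTD {l. \<sigma> l = -1}) \<in> hom PM (Aut\<lparr>carrier := TTgroup\<rparr>)"
    by (rule homI) (auto simp: TTgroup_eq_range PM_mult_minus_one_set TTD_mult)
  have "bij_betw TTD UNIV TTgroup"
    unfolding TTgroup_eq_range by (rule inj_on_imp_bij_betw[OF inj_TTD])
  from bij_betw_trans[OF bij_betw_PM_minus_one_set this]
  show "bij_betw (\<lambda>\<sigma>. TTD {l. \<sigma> l = -1}) (carrier PM) (carrier (Aut\<lparr>carrier := TTgroup\<rparr>))"
    by (simp add: comp_def)
qed

lemma ee_minus: "ee (- z) = inverse (ee z)"
  unfolding ee_def by (simp add: exp_minus[symmetric])

lemma ee_sum: "finite A \<Longrightarrow> ee (\<Sum>l\<in>A. f l) = (\<Prod>l\<in>A. ee (f l))"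
  unfolding ee_def by (simp add: sum_distrib_left exp_sum)

lemma TT_resonance_iff:
  assumes "TT \<Lambda> (w, a, \<theta>) = (w', a', \<theta>')"
  shows "ee (of_real (\<theta>' l)) = exp (u * a' l) \<longleftrightarrow> ee (of_real (\<theta> l)) = exp (u * a l)"
proof -
  have "a' l = (if l \<in> \<Lambda> then - a l else a l)" "\<theta>' l = (if l \<in> \<Lambda> then - \<theta> l else \<theta> l)"
    using assms unfolding TT_def by auto
  then show ?thesis
    by (simp add: ee_minus exp_minus)
qed

lemma mem_EE_iff:
  "\<epsilon> \<in> EE \<longleftrightarrow> (\<forall>w a \<theta>. (w, a, \<theta>) \<in> DD \<longrightarrow> 0 < \<epsilon> (w, a, \<theta>) \<and>
     (\<forall>l u. 0 < cmod u \<and> cmod u \<le> \<epsilon> (w, a, \<theta>) \<longrightarrow> ee (of_real (\<theta> l)) \<noteq> exp (u * a l)))"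
  unfolding EE_def by auto

lemma EE_comp_TT:
  fixes \<Lambda> :: "('n::finite) set"
  assumes "\<epsilon> \<in> EE"
  shows "\<epsilon> \<circ> TT \<Lambda> \<in> EE"
  unfolding mem_EE_iff
proof (intro allI impI)
  fix w a and \<theta> :: "'n \<Rightarrow> real" assume "(w, a, \<theta>) \<in> DD"
  obtain w' a' \<theta>' where T: "TT \<Lambda> (w, a, \<theta>) = (w', a', \<theta>')" by (cases "TT \<Lambda> (w, a, \<theta>)")
  have "(w', a', \<theta>') \<in> DD"
    unfolding T[symmetric] using \<open>(w, a, \<theta>) \<in> DD\<close> by (rule TT_in_DD)
  with assms have "0 < \<epsilon> (w', a', \<theta>')"
    and "\<forall>l u. 0 < cmod u \<and> cmod u \<le> \<epsilon> (w', a', \<theta>') \<longrightarrow> ee (of_real (\<theta>' l)) \<noteq> exp (u * a' l)"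
    unfolding mem_EE_iff by blast+
  then show "0 < (\<epsilon> \<circ> TT \<Lambda>) (w, a, \<theta>) \<and> (\<forall>l u. 0 < cmod u \<and> cmod u \<le> (\<epsilon> \<circ> TT \<Lambda>) (w, a, \<theta>)
      \<longrightarrow> ee (of_real (\<theta> l)) \<noteq> exp (u * a l))"
    by (simp add: T TT_resonance_iff[OF T])
qed

lemma one_minus_inverse_factor:
  fixes x :: "'a::field"
  assumes "x \<noteq> 0" "x \<noteq> 1"
  shows "1 / (1 - inverse x) = - x * (1 / (1 - x))"
  using assms by (simp add: field_simps)

lemma FF_TT:
  assumes "\<forall>l. ee (of_real (\<theta> l)) * exp (- u * a l) \<noteq> 1"
  shows "FF u (TT \<Lambda> (w, a, \<theta>))
    = (-1) ^ card \<Lambda> * ee (of_real (\<Sum>l\<in>\<Lambda>. \<theta> l)) * FF u (w, a, (\<theta> :: ('n::finite) \<Rightarrow> real))"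
proof -
  define x where "x l = ee (of_real (\<theta> l)) * exp (- u * a l)" for l
  define f where "f l = 1 / (1 - x l)" for l
  have factor: "1 / (1 - ee (of_real (if l \<in> \<Lambda> then - \<theta> l else \<theta> l))
        * exp (- u * (if l \<in> \<Lambda> then - a l else a l)))
      = (if l \<in> \<Lambda> then - x l else 1) * f l" for l
  proof (cases "l \<in> \<Lambda>")
    case True
    have "x l \<noteq> 0" "x l \<noteq> 1"
      using assms unfolding x_def ee_def by auto
    moreover have "ee (of_real (- \<theta> l)) * exp (- u * - a l) = inverse (x l)"
      unfolding x_def by (simp add: ee_minus exp_minus[symmetric] mult.commute)
    ultimately show ?thesis
      using True unfolding f_def by (simp add: one_minus_inverse_factor)
  next
    case False
    then show ?thesis unfolding f_def x_def by simp
  qed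
  have "(\<Prod>l\<in>UNIV. if l \<in> \<Lambda> then - x l else 1) = (\<Prod>l\<in>\<Lambda>. (-1) * x l)"
    by (simp add: prod.If_cases)
  also have "\<dots> = (-1) ^ card \<Lambda> * (ee (of_real (\<Sum>l\<in>\<Lambda>. \<theta> l)) * exp (- u * (\<Sum>l\<in>\<Lambda>. a l)))"
    unfolding x_def prod.distrib
    by (simp add: of_real_sum ee_sum sum_distrib_left exp_sum)
  finally have signs: "(\<Prod>l\<in>UNIV. if l \<in> \<Lambda> then - x l else 1) = \<dots>" .
  have "FF u (TT \<Lambda> (w, a, \<theta>))
      = exp (- u * (w - (\<Sum>l\<in>\<Lambda>. a l))) * (\<Prod>l\<in>UNIV. if l \<in> \<Lambda> then - x l else 1) * (\<Prod>l\<in>UNIV. f l)"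
    unfolding FF_def TT_def by (simp only: prod.case factor prod.distrib mult.assoc)
  also have "\<dots> = (-1) ^ card \<Lambda> * ee (of_real (\<Sum>l\<in>\<Lambda>. \<theta> l)) * (exp (- u * w) * (\<Prod>l\<in>UNIV. f l))"
    unfolding signs by (simp add: right_diff_distrib exp_diff exp_minus field_simps)
  also have "\<dots> = (-1) ^ card \<Lambda> * ee (of_real (\<Sum>l\<in>\<Lambda>. \<theta> l)) * FF u (w, a, \<theta>)"
    unfolding FF_def f_def x_def by simp
  finally show ?thesis .
qed

theorem lemma4:
  shows "subgroup (TTgroup :: (('n::finite) pt \<Rightarrow> 'n pt) set) (Aut :: ('n pt \<Rightarrow> 'n pt) monoid)
    \<and> (TTgroup :: ('n pt \<Rightarrow> 'n pt) set) \<subseteq> Aut_pi \<inter> CM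
    \<and> (\<exists>\<phi>. \<phi> \<in> iso (PM :: ('n \<Rightarrow> int) monoid) ((Aut :: ('n pt \<Rightarrow> 'n pt) monoid)\<lparr>carrier := TTgroup\<rparr>))
    \<and> (\<forall>\<Lambda>1 \<Lambda>2 :: 'n set. restrict (TT \<Lambda>1) DD \<otimes>\<^bsub>Aut\<^esub> restrict (TT \<Lambda>2) DD
           = restrict (TT (symdiff \<Lambda>1 \<Lambda>2)) DD)
    \<and> (\<forall>\<Lambda> :: 'n set. \<forall>\<epsilon> \<in> EE. \<epsilon> \<circ> TT \<Lambda> \<in> EE)
    \<and> (\<forall>\<Lambda> :: 'n set. \<forall>w a \<theta> u. (w, a, \<theta>) \<in> DD
          \<longrightarrow> (\<forall>l. ee (of_real (\<theta> l)) * exp (- u * a l) \<noteq> 1)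
          \<longrightarrow> FF u (TT \<Lambda> (w, a, \<theta>))
              = (-1) ^ card \<Lambda> * ee (of_real (\<Sum>l\<in>\<Lambda>. \<theta> l)) * FF u (w, a, \<theta>))"
proof (intro conjI allI ballI impI Int_greatest)
  show "\<exists>\<phi>. \<phi> \<in> iso (PM :: ('n \<Rightarrow> int) monoid) ((Aut :: ('n pt \<Rightarrow> 'n pt) monoid)\<lparr>carrier := TTgroup\<rparr>)"
    using iso_PM_TTgroup by blast
qed (simp_all add: subgroup_TTgroup TTgroup_subset_Aut_pi TTgroup_subset_CM TTD_mult EE_comp_TT FF_TT)

end
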